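(* Let $L$ be an $r\times m$ matrix of integers of full rank $r$. There exist $\lambda^*>0$ and $p_0$ depending only on $L$ such that for every integer $p\ge p_0$ and every $j/p\in J(L,p)$ we have $\lambda(j)\ge\lambda^*$.
   Context: $\mathbb{T}=\mathbb{R}/\mathbb{Z}$, and $\mathbb{T}^m$ is identified with $[0,1)^m$ with coordinatewise addition mod 1. $\ker_{\mathbb{T}}L=\{x\in\mathbb{T}^m:Lx=0\}$ with normalized Haar probability measure $\mu_L$. For $j\in\mathbb{Z}_p^m$ with coordinates $j(i)\in\{0,\ldots,p-1\}$, $j/p=(j(1)/p,\ldots,j(m)/p)\in\mathbb{T}^m$, and $\lambda(j)=p^{m-r}\mu_L\big((j/p+[0,1/p)^m)\cap\ker_{\mathbb{T}}L\big)$. $J(L,p)=\{j/p:\ j\in\mathbb{Z}_p^m,\ \mu_L\big((j/p+[0,1/p)^m)\cap\ker_{\mathbb{T}}L\big)>0\}$. *)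

theory Defs
  imports "HOL-Probability.Probability"
begin

text \<open>The torus T^m = R^m/Z^m is identified with [0,1)^m (coordinates indexed by the
finite type 'm), with coordinatewise addition mod 1.\<close>

definition torus :: "(real^'m) set" where
  "torus = {x. \<forall>i. 0 \<le> x$i \<and> x$i < 1}"

definition tadd :: "real^'m \<Rightarrow> real^'m \<Rightarrow> real^'m" where
  "tadd x y = (\<chi> i. frac (x$i + y$i))"

definition realmat :: "int^'m^'r \<Rightarrow> real^'m^'r" where
  "realmat L = (\<chi> i j. real_of_int (L$i$j))"

definition kerT :: "int^'m^'r \<Rightarrow> (real^'m) set" where
  "kerT L = {x \<in> torus. \<forall>i. (realmat L *v x)$i \<in> \<int>}"

definition haar :: "(real^'m) set \<Rightarrow> (real^'m) measure" where
  "haar K = (THE \<mu>. prob_space \<mu> \<and> sets \<mu> = sets (restrict_space borel K) \<and>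
      (\<forall>k\<in>K. \<forall>A\<in>sets \<mu>. emeasure \<mu> {x \<in> K. tadd x k \<in> A} = emeasure \<mu> A))"

abbreviation muL :: "int^'m^'r \<Rightarrow> (real^'m) measure" where
  "muL L \<equiv> haar (kerT L)"

definition gridbox :: "nat \<Rightarrow> nat^'m \<Rightarrow> (real^'m) set" where
  "gridbox p j = {x. \<forall>i. real (j$i) / real p \<le> x$i \<and> x$i < (real (j$i) + 1) / real p}"

definition lam :: "int^'m^'r \<Rightarrow> nat \<Rightarrow> nat^'m \<Rightarrow> real" where
  "lam L p j = real p ^ (CARD('m) - CARD('r)) * measure (muL L) (gridbox p j \<inter> kerT L)"

definition inJ :: "int^'m^'r \<Rightarrow> nat \<Rightarrow> nat^'m \<Rightarrow> bool" where
  "inJ L p j \<longleftrightarrow> (\<forall>i. j$i < p) \<and> measure (muL L) (gridbox p j \<inter> kerT L) > 0"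

end

theory Submission
  imports Defs
begin

text \<open>
  Choose \<open>r\<close> columns \<open>S\<close> of \<open>L\<close> forming an invertible minor and let \<open>E\<close> be an integer
  matrix with \<open>L E = d I\<close>, supported on the rows \<open>S\<close> (a signed adjugate of the minor). Then
  \<open>Q = d I - E L\<close> is an integer matrix with \<open>L Q = 0\<close> acting as \<open>d\<close> on the coordinates outside
  \<open>S\<close>, and every point of \<open>ker\<^sub>T L\<close> is \<open>f + Q u mod 1\<close> with \<open>u \<in> T\<^sup>m\<close> and \<open>f\<close> in the finite
  group \<open>F\<close> of the points \<open>E z / d mod 1\<close>, \<open>z \<in> \<int>\<^sup>r\<close>. This parametrisation is a
  homomorphism, so it pushes (uniform on \<open>F\<close>) \<open>\<otimes>\<close> (Lebesgue on \<open>T\<^sup>m\<close>) forward to a translation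
  invariant probability measure, which is \<open>\<mu>\<^sub>L\<close>. Hence \<open>\<mu>\<^sub>L\<close>(box \<open>\<inter>\<close> kernel) is an average over
  \<open>f \<in> F\<close> of the Lebesgue measures of the slices \<open>{u. f + Q u \<in> box}\<close>.

  Stretching the \<open>m - r\<close> coordinates outside \<open>S\<close> by \<open>d p\<close> and recording the integer parts
  cuts a slice into affine images of finitely many cells \<open>{w. \<lfloor>(Q w)\<^sub>s\<rfloor> = \<alpha>\<^sub>s for s \<in> S}\<close>, the
  set of relevant \<open>\<alpha>\<close> not depending on \<open>p\<close>, and membership in the box is constant on each
  piece. So a slice of positive measure contains a whole piece, of measure at least
  \<open>c / (d p)^(m - r)\<close> where \<open>c\<close> is the least positive cell measure, and
  \<open>\<lambda>(j) \<ge> c / (|F| d^(m - r))\<close>.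
\<close>

definition frac_vec :: "real^'n \<Rightarrow> real^'n" where
  "frac_vec x = (\<chi> i. frac (x$i))"

definition int_vec :: "real^'n \<Rightarrow> bool" where
  "int_vec x \<longleftrightarrow> (\<forall>i. x$i \<in> \<int>)"

lemma int_vec_add [intro]: "int_vec x \<Longrightarrow> int_vec y \<Longrightarrow> int_vec (x + y)"
  and int_vec_uminus [intro]: "int_vec x \<Longrightarrow> int_vec (- x)"
  by (simp_all add: int_vec_def)

lemma int_vec_matrix_vector_mult [intro]:
  "(\<And>a b. A$a$b \<in> \<int>) \<Longrightarrow> int_vec x \<Longrightarrow> int_vec (A *v x)"
  by (simp add: int_vec_def matrix_vector_mult_def Ints_sum)

lemma int_vec_frac_vec_diff [intro]: "int_vec (frac_vec x - x)"
proof -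
  have "frac a - a \<in> \<int>" for a :: real
    by (simp add: frac_def)
  then show ?thesis by (simp add: int_vec_def frac_vec_def)
qed

lemma frac_vec_eqI: "int_vec (x - y) \<Longrightarrow> frac_vec x = frac_vec y"
  unfolding int_vec_def frac_vec_def vec_eq_iff
  by (metis frac_add_int_left diff_add_cancel vec_lambda_beta vector_minus_component)

lemma frac_vec_in_torus [simp]: "frac_vec x \<in> torus"
  by (simp add: frac_vec_def torus_def frac_lt_1)

lemma frac_vec_torus [simp]: "x \<in> torus \<Longrightarrow> frac_vec x = x"
  by (simp add: frac_vec_def torus_def vec_eq_iff frac_eq)

lemma tadd_eq_frac_vec: "tadd x y = frac_vec (x + y)"
  by (simp add: tadd_def frac_vec_def)

lemma tadd_commute: "tadd x y = tadd y x"
  by (simp add: tadd_def add.commute)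

lemma tadd_in_torus [simp]: "tadd x y \<in> torus"
  by (simp add: tadd_eq_frac_vec)

lemma tadd_right_cancel:
  assumes "x \<in> torus" "y \<in> torus" "tadd x c = tadd y c"
  shows "x = y"
proof -
  have "x$i - y$i \<in> \<int>" for i
    using assms(3) by (auto simp: tadd_def vec_eq_iff elim!: allE[of _ i] frac_eqE)
  moreover have "\<bar>x$i - y$i\<bar> < 1" for i
    using assms(1,2) by (auto simp: torus_def abs_diff_less_iff dest!: spec[of _ i])
  ultimately show ?thesis
    by (metis Ints_nonzero_abs_less1 right_minus_eq vec_eq_iff)
qed

lemma borel_measurable_frac [measurable]: "(frac :: real \<Rightarrow> real) \<in> borel_measurable borel"
  unfolding frac_def by measurable

lemma borel_measurable_vec_nthI:
  fixes f :: "'a \<Rightarrow> real^'n"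
  assumes "\<And>i. (\<lambda>x. f x $ i) \<in> borel_measurable M"
  shows "f \<in> borel_measurable M"
proof (subst borel_measurable_euclidean_space, intro ballI)
  fix b :: "real^'n" assume "b \<in> Basis"
  then obtain i where "b = axis i 1" by (auto simp: Basis_vec_def)
  then show "(\<lambda>x. f x \<bullet> b) \<in> borel_measurable M"
    using assms by (simp add: inner_axis)
qed

lemma borel_measurable_frac_vec [measurable]:
  "(frac_vec :: real^'n \<Rightarrow> real^'n) \<in> borel_measurable borel"
  by (rule borel_measurable_vec_nthI) (simp add: frac_vec_def)

lemma borel_measurable_tadd [measurable]:
  assumes "f \<in> borel_measurable M" "g \<in> borel_measurable M"
  shows "(\<lambda>x. tadd (f x) (g x) :: real^'m) \<in> borel_measurable M"
  unfolding tadd_eq_frac_vec using assms by measurable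

lemma torus_borel [measurable]: "torus \<in> sets (borel :: (real^'m) measure)"
  unfolding torus_def by measurable

lemma emeasure_lebesgue_torus: "emeasure lebesgue (torus :: (real^'m) set) = 1"
proof -
  let ?one = "\<chi> i. 1 :: real^'m"
  have box: "emeasure lborel (box 0 ?one) = 1" "emeasure lborel (cbox 0 ?one) = 1"
    by (simp_all add: emeasure_lborel_box_eq emeasure_lborel_cbox_eq Basis_vec_def
        inner_axis prod.neutral)
  have "emeasure lborel (box 0 ?one) \<le> emeasure lborel (torus :: (real^'m) set)"
    by (rule emeasure_mono) (auto simp: mem_box_cart torus_def less_imp_le)
  moreover have "emeasure lborel (torus :: (real^'m) set) \<le> emeasure lborel (cbox 0 ?one)"
    by (rule emeasure_mono) (auto simp: mem_box_cart torus_def less_imp_le)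
  ultimately show ?thesis by (simp add: box)
qed

lemma emeasure_lebesgue_torus_subset_finite:
  fixes X :: "(real^'m) set"
  shows "X \<subseteq> torus \<Longrightarrow> emeasure lebesgue X = ennreal (measure lebesgue X)"
proof (rule emeasure_eq_ennreal_measure)
  assume "X \<subseteq> torus"
  then have "emeasure lebesgue X \<le> emeasure lebesgue (torus :: (real^'m) set)"
    by (rule emeasure_mono) simp
  then show "emeasure lebesgue X \<noteq> \<top>"
    by (auto simp: emeasure_lebesgue_torus top_unique)
qed

lemma emeasure_lebesgue_translation:
  "emeasure lebesgue ((+) a ` S) = emeasure lebesgue (S :: 'a::euclidean_space set)"
  using emeasure_lebesgue_affine[of 1 a S] by (simp add: add.commute)

lemma tadd_eq_wrap:
  assumes "u \<in> torus" "c \<in> torus"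
  shows "tadd u c = u + c - (\<chi> i. if 1 \<le> u$i + c$i then 1 else 0)"
proof -
  have bounds: "0 \<le> u$i \<and> u$i < 1 \<and> 0 \<le> c$i \<and> c$i < 1" for i
    using assms by (auto simp: torus_def)
  have "frac (u$i + c$i) = u$i + c$i - (if 1 \<le> u$i + c$i then 1 else 0)" for i
    using bounds[of i] by (auto simp: frac_unique_iff)
  then show ?thesis by (simp add: tadd_def vec_eq_iff)
qed

lemma torus_wrap_piece_eq:
  fixes X :: "(real^'m) set" and W :: "'m set"
  assumes X: "X \<subseteq> torus" and c: "c \<in> torus"
  defines "wrap \<equiv> \<chi> i. if i \<in> W then 1 else 0"
  shows "{u \<in> torus. tadd u c \<in> X \<and> {i. 1 \<le> u$i + c$i} = W}
    = (+) (wrap - c) ` {v \<in> X. {i. v$i < c$i} = W}"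
proof (intro equalityI subsetI)
  have c01: "0 \<le> c$i" "c$i < 1" for i using c by (auto simp: torus_def)
  fix u assume u: "u \<in> {u \<in> torus. tadd u c \<in> X \<and> {i. 1 \<le> u$i + c$i} = W}"
  then have v: "tadd u c = u + c - wrap"
    using tadd_eq_wrap[OF _ c] by (auto simp: wrap_def vec_eq_iff)
  have W: "W = {i. 1 \<le> u$i + c$i}" using u by simp
  have "(tadd u c)$i < c$i \<longleftrightarrow> i \<in> W" for i
  proof -
    have "0 \<le> u$i" "u$i < 1" using u by (auto simp: torus_def)
    then show ?thesis by (auto simp: v W wrap_def)
  qed
  then have "tadd u c \<in> {v \<in> X. {i. v$i < c$i} = W}" using u by auto
  moreover have "u = wrap - c + tadd u c" by (simp add: v)
  ultimately show "u \<in> (+) (wrap - c) ` {v \<in> X. {i. v$i < c$i} = W}" by blast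
next
  have c01: "0 \<le> c$i" "c$i < 1" for i using c by (auto simp: torus_def)
  fix u assume "u \<in> (+) (wrap - c) ` {v \<in> X. {i. v$i < c$i} = W}"
  then obtain v where v: "v \<in> X" "{i. v$i < c$i} = W" and u: "u = wrap - c + v" by blast
  have vt: "0 \<le> v$i" "v$i < 1" for i using v X by (auto simp: torus_def)
  have "0 \<le> u$i \<and> u$i < 1 \<and> (i \<in> W \<longleftrightarrow> 1 \<le> u$i + c$i)" for i
    using v vt[of i] c01[of i] by (auto simp: u wrap_def)
  then have "u \<in> torus" "{i. 1 \<le> u$i + c$i} = W"
    by (auto simp: torus_def)
  moreover have "tadd u c = v"
  proof -
    have "tadd u c = frac_vec (v + wrap)" by (simp add: tadd_eq_frac_vec u add.commute)
    also have "\<dots> = frac_vec v" by (rule frac_vec_eqI) (simp add: int_vec_def wrap_def)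
    finally show ?thesis using v X by auto
  qed
  ultimately show "u \<in> {u \<in> torus. tadd u c \<in> X \<and> {i. 1 \<le> u$i + c$i} = W}" using v by simp
qed

text \<open>Sort the points by the set \<open>W\<close> of coordinates that wrap around: on each piece,
  \<open>u \<mapsto> tadd u c\<close> is an ordinary translation.\<close>

lemma lebesgue_torus_translate:
  fixes X :: "(real^'m) set"
  assumes X: "X \<subseteq> torus" "X \<in> sets lebesgue" and c: "c \<in> torus"
  shows "{u \<in> torus. tadd u c \<in> X} \<in> sets lebesgue"
    and "emeasure lebesgue {u \<in> torus. tadd u c \<in> X} = emeasure lebesgue X"
proof -
  define Y where "Y W = {u \<in> torus. tadd u c \<in> X \<and> {i. 1 \<le> u$i + c$i} = W}" for W
  define X' where "X' W = {v \<in> X. {i. v$i < c$i} = W}" for W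
  have Y_eq: "Y W = (+) ((\<chi> i. if i \<in> W then 1 else 0) - c) ` X' W" for W
    unfolding Y_def X'_def by (rule torus_wrap_piece_eq[OF X(1) c])
  have X'_sets: "X' W \<in> sets lebesgue" for W
  proof -
    have "{v. {i. v$i < c$i} = W} = (\<Inter>i. {v. i \<in> W \<longleftrightarrow> v$i < c$i})" by auto
    also have "\<dots> \<in> sets (borel :: (real^'m) measure)" by measurable
    finally have "{v. {i. v$i < c$i} = W} \<in> sets (lebesgue :: (real^'m) measure)" by auto
    with X(2) have "X \<inter> {v. {i. v$i < c$i} = W} \<in> sets lebesgue" by (rule sets.Int)
    moreover have "X' W = X \<inter> {v. {i. v$i < c$i} = W}" by (auto simp: X'_def)
    ultimately show ?thesis by (simp only:)
  qed
  have Y_sets: "Y W \<in> sets lebesgue" for W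
    unfolding Y_eq by (rule lebesgue_sets_translation[OF X'_sets])
  have pieces: "{u \<in> torus. tadd u c \<in> X} = (\<Union>W. Y W)" "X = (\<Union>W. X' W)"
    by (auto simp: Y_def X'_def)
  have disj: "disjoint_family Y" "disjoint_family X'"
    by (auto simp: disjoint_family_on_def Y_def X'_def)
  show "{u \<in> torus. tadd u c \<in> X} \<in> sets lebesgue"
    unfolding pieces(1) by (simp add: Y_sets sets.finite_UN)
  have "emeasure lebesgue (\<Union>W. Y W) = (\<Sum>W\<in>UNIV. emeasure lebesgue (Y W))"
    using Y_sets disj(1) by (intro sum_emeasure[symmetric]) auto
  also have "\<dots> = (\<Sum>W\<in>UNIV. emeasure lebesgue (X' W))"
    unfolding Y_eq emeasure_lebesgue_translation ..
  also have "\<dots> = emeasure lebesgue (\<Union>W. X' W)"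
    using X'_sets disj(2) by (intro sum_emeasure) auto
  finally show "emeasure lebesgue {u \<in> torus. tadd u c \<in> X} = emeasure lebesgue X"
    using pieces by simp
qed

abbreviation lebesgue_torus :: "(real^'m) measure" where
  "lebesgue_torus \<equiv> restrict_space lebesgue torus"

lemma prob_space_lebesgue_torus: "prob_space lebesgue_torus"
  by standard (simp add: emeasure_restrict_space emeasure_lebesgue_torus)

lemma kerT_borel:
  fixes L :: "int^'m^'r"
  shows "kerT L \<in> sets borel"
proof -
  have "(\<lambda>x. (realmat L *v x)$i) -` \<int> \<inter> space borel \<in> sets (borel :: (real^'m) measure)" for i
    by (rule measurable_sets[OF borel_measurable_continuous_onI borel_closed[OF closed_Ints]])
      (intro continuous_intros)
  moreover have "kerT L = torus \<inter> (\<Inter>i. (\<lambda>x. (realmat L *v x)$i) -` \<int> \<inter> space borel)"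
    by (auto simp: kerT_def)
  ultimately show ?thesis by auto
qed

lemma gridbox_borel: "gridbox p j \<in> sets borel"
  unfolding gridbox_def by measurable

definition haar_measure_on :: "(real^'m) set \<Rightarrow> (real^'m) measure \<Rightarrow> bool" where
  "haar_measure_on K \<mu> \<longleftrightarrow> prob_space \<mu> \<and> sets \<mu> = sets (restrict_space borel K) \<and>
      (\<forall>k\<in>K. \<forall>A\<in>sets \<mu>. emeasure \<mu> {x \<in> K. tadd x k \<in> A} = emeasure \<mu> A)"

lemma borel_measurable_tadd_restrict:
  "(\<lambda>z. tadd (fst z) (snd z))
     \<in> borel_measurable (restrict_space borel K \<Otimes>\<^sub>M restrict_space borel K' :: ((real^'m) \<times> (real^'m)) measure)"
proof (rule borel_measurable_tadd)
  have "(\<lambda>x. x) \<in> borel_measurable (restrict_space borel K)" for K :: "(real^'m) set"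
    by (rule measurable_restrict_space1) simp
  then show "fst \<in> borel_measurable (restrict_space borel K \<Otimes>\<^sub>M restrict_space borel K')"
    and "snd \<in> borel_measurable (restrict_space borel K \<Otimes>\<^sub>M restrict_space borel K')"
    by (auto intro: measurable_compose[OF measurable_fst] measurable_compose[OF measurable_snd])
qed

lemma emeasure_pair_tadd_vimage:
  assumes K: "K \<in> sets borel" and \<mu>: "prob_space \<mu>" "sets \<mu> = sets (restrict_space borel K)"
    and \<nu>: "haar_measure_on K \<nu>" and A: "A \<in> sets \<nu>"
  defines "G \<equiv> (\<lambda>z. tadd (fst z) (snd z)) -` A \<inter> space (\<mu> \<Otimes>\<^sub>M \<nu>)"
  shows "G \<in> sets (\<mu> \<Otimes>\<^sub>M \<nu>)" and "emeasure (\<mu> \<Otimes>\<^sub>M \<nu>) G = emeasure \<nu> A"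
proof -
  interpret \<mu>: prob_space \<mu> by (rule \<mu>(1))
  interpret \<nu>: prob_space \<nu> using \<nu> by (simp add: haar_measure_on_def)
  have sets_\<nu>: "sets \<nu> = sets (restrict_space borel K)" using \<nu> by (simp add: haar_measure_on_def)
  have space: "space \<mu> = K" "space \<nu> = K"
    using K \<mu>(2) sets_\<nu> by (auto dest!: sets_eq_imp_space_eq)
  have "(\<lambda>z. tadd (fst z) (snd z)) \<in> borel_measurable (\<mu> \<Otimes>\<^sub>M \<nu>)"
    using borel_measurable_tadd_restrict
    by (simp add: measurable_cong_sets[OF sets_pair_measure_cong[OF \<mu>(2) sets_\<nu>] refl])
  moreover have "A \<in> sets borel" using A K by (simp add: sets_\<nu> sets_restrict_space_iff)
  ultimately show G: "G \<in> sets (\<mu> \<Otimes>\<^sub>M \<nu>)" unfolding G_def by (rule measurable_sets)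
  have "emeasure (\<mu> \<Otimes>\<^sub>M \<nu>) G = (\<integral>\<^sup>+x. emeasure \<nu> (Pair x -` G) \<partial>\<mu>)"
    by (rule \<nu>.emeasure_pair_measure_alt[OF G])
  also have "\<dots> = (\<integral>\<^sup>+x. emeasure \<nu> A \<partial>\<mu>)"
  proof (rule nn_integral_cong)
    fix x assume x: "x \<in> space \<mu>"
    then have "Pair x -` G = {y \<in> K. tadd y x \<in> A}"
      by (auto simp: G_def space_pair_measure space tadd_commute)
    then show "emeasure \<nu> (Pair x -` G) = emeasure \<nu> A"
      using \<nu> x A by (simp add: haar_measure_on_def space)
  qed
  also have "\<dots> = emeasure \<nu> A" by (simp add: \<mu>.emeasure_space_1)
  finally show "emeasure (\<mu> \<Otimes>\<^sub>M \<nu>) G = emeasure \<nu> A" .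
qed

text \<open>Both \<open>\<mu> A\<close> and \<open>\<nu> A\<close> are the \<open>\<mu> \<Otimes> \<nu>\<close>-measure of \<open>{(x, y). tadd x y \<in> A}\<close>.\<close>

lemma haar_measure_on_unique:
  assumes K: "K \<in> sets borel" and \<mu>: "haar_measure_on K \<mu>" and \<nu>: "haar_measure_on K \<nu>"
  shows "\<mu> = \<nu>"
proof (rule measure_eqI)
  interpret \<mu>: prob_space \<mu> using \<mu> by (simp add: haar_measure_on_def)
  interpret \<nu>: prob_space \<nu> using \<nu> by (simp add: haar_measure_on_def)
  interpret pair_sigma_finite \<nu> \<mu> by unfold_locales
  have sets: "sets \<mu> = sets (restrict_space borel K)" "sets \<nu> = sets (restrict_space borel K)"
    using \<mu> \<nu> by (simp_all add: haar_measure_on_def)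
  then show sets_eq: "sets \<mu> = sets \<nu>" by simp
  fix A assume A: "A \<in> sets \<mu>"
  let ?G = "\<lambda>M N. (\<lambda>z. tadd (fst z) (snd z)) -` A \<inter> space (M \<Otimes>\<^sub>M N)"
  note G_\<nu>\<mu> = emeasure_pair_tadd_vimage[OF K \<nu>.prob_space_axioms sets(2) \<mu> A]
  have "emeasure \<mu> A = emeasure (\<nu> \<Otimes>\<^sub>M \<mu>) (?G \<nu> \<mu>)"
    using G_\<nu>\<mu>(2) by simp
  also have "\<dots> = emeasure (\<mu> \<Otimes>\<^sub>M \<nu>) ((\<lambda>(x, y). (y, x)) -` ?G \<nu> \<mu> \<inter> space (\<mu> \<Otimes>\<^sub>M \<nu>))"
    by (subst distr_pair_swap) (rule emeasure_distr[OF measurable_pair_swap' G_\<nu>\<mu>(1)])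
  also have "(\<lambda>(x, y). (y, x)) -` ?G \<nu> \<mu> \<inter> space (\<mu> \<Otimes>\<^sub>M \<nu>) = ?G \<mu> \<nu>"
    by (auto simp: space_pair_measure tadd_commute)
  also have "emeasure (\<mu> \<Otimes>\<^sub>M \<nu>) \<dots> = emeasure \<nu> A"
    using emeasure_pair_tadd_vimage(2)[OF K \<mu>.prob_space_axioms sets(1) \<nu>] A sets_eq by simp
  finally show "emeasure \<mu> A = emeasure \<nu> A" .
qed

lemma haar_eqI:
  assumes "K \<in> sets borel" "haar_measure_on K \<nu>"
  shows "haar K = \<nu>"
  unfolding haar_def haar_measure_on_def[symmetric]
  using assms haar_measure_on_unique by blast

lemma floor_mult_mod_eq_iff:
  fixes p j :: int and x :: real
  assumes "0 < p" "0 \<le> j" "j < p"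
  shows "\<lfloor>of_int p * x\<rfloor> mod p = j \<longleftrightarrow> of_int j / of_int p \<le> frac x \<and> frac x < (of_int j + 1) / of_int p"
proof -
  define m where "m = \<lfloor>of_int p * frac x\<rfloor>"
  have "of_int p * x = of_int (p * \<lfloor>x\<rfloor>) + of_int p * frac x"
    by (simp add: frac_def algebra_simps)
  then have "\<lfloor>of_int p * x\<rfloor> = p * \<lfloor>x\<rfloor> + m"
    unfolding m_def by (metis add.commute floor_add_int)
  moreover have "0 \<le> m" "m < p"
    using assms frac_lt_1[of x] by (auto simp: m_def floor_less_iff)
  ultimately have "\<lfloor>of_int p * x\<rfloor> mod p = m" by simp
  moreover have "m = j \<longleftrightarrow> of_int j \<le> of_int p * frac x \<and> of_int p * frac x < of_int j + 1"
    unfolding m_def by (simp add: floor_eq_iff)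
  ultimately show ?thesis
    using assms by (simp add: divide_le_eq less_divide_eq mult.commute)
qed

lemma emeasure_lebesgue_vec_affine:
  fixes c :: "'n::finite \<Rightarrow> real" and t :: "real^'n"
  assumes c: "\<And>i. c i \<noteq> 0" and A: "A \<in> sets lebesgue"
  defines "h \<equiv> \<lambda>x. \<chi> i. c i * x$i + t$i"
  shows "h -` A \<in> sets lebesgue"
    and "emeasure lebesgue A = ennreal (\<Prod>i\<in>UNIV. \<bar>c i\<bar>) * emeasure lebesgue (h -` A)"
proof -
  define c' where "c' b = (\<Sum>k\<in>UNIV. c k * b$k)" for b :: "real^'n"
  have c'_axis: "c' (axis i 1) = c i" for i
    by (simp add: c'_def axis_def if_distrib cong: if_cong)
  have Basis_eq: "(Basis :: (real^'n) set) = range (\<lambda>i. axis i 1)"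
    by (auto simp: Basis_vec_def)
  have inj_axis: "inj (\<lambda>i::'n. axis i (1::real))"
    by (rule injI) (simp add: axis_eq_axis)
  have "(\<Sum>j\<in>Basis. (c' j * (x \<bullet> j)) *\<^sub>R j) $ a = c a * x$a" for x a
  proof -
    have "(\<Sum>j\<in>Basis. (c' j * (x \<bullet> j)) *\<^sub>R j) $ a = (\<Sum>j\<in>Basis. c' j * (x \<bullet> j) * j $ a)"
      by simp
    also have "\<dots> = (\<Sum>i\<in>UNIV. c i * x$i * axis i 1 $ a)"
      by (simp add: Basis_eq sum.reindex[OF inj_axis] c'_axis inner_axis)
    also have "\<dots> = c a * x$a"
      by (simp add: axis_def if_distrib cong: if_cong)
    finally show ?thesis .
  qed
  then have h_eq: "h = (\<lambda>x. t + (\<Sum>j\<in>Basis. (c' j * (x \<bullet> j)) *\<^sub>R j))"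
    unfolding h_def by (intro ext) (simp add: vec_eq_iff add.commute del: sum_component)
  have c'_nz: "c' b \<noteq> 0" if "b \<in> Basis" for b
    using that c c'_axis by (auto simp: Basis_eq)
  have "(\<Prod>j\<in>Basis. \<bar>c' j\<bar>) = (\<Prod>i\<in>UNIV. \<bar>c i\<bar>)"
    by (simp add: Basis_eq prod.reindex[OF inj_axis] c'_axis)
  moreover note lebesgue_affine_euclidean[of c' t] lebesgue_affine_measurable[of c' t]
  ultimately have eq: "lebesgue = density (distr lebesgue lebesgue h) (\<lambda>_. \<Prod>i\<in>UNIV. \<bar>c i\<bar>)"
    and h: "h \<in> lebesgue \<rightarrow>\<^sub>M lebesgue"
    using c'_nz by (simp_all add: h_eq)
  show "h -` A \<in> sets lebesgue"
    using measurable_sets[OF h A] by simp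
  have "emeasure lebesgue A = emeasure (density (distr lebesgue lebesgue h) (\<lambda>_. \<Prod>i\<in>UNIV. \<bar>c i\<bar>)) A"
    using eq by (rule arg_cong)
  also have "\<dots> = ennreal (\<Prod>i\<in>UNIV. \<bar>c i\<bar>) * emeasure lebesgue (h -` A)"
    using A h by (simp add: emeasure_density nn_integral_cmult_indicator emeasure_distr)
  finally show "emeasure lebesgue A = ennreal (\<Prod>i\<in>UNIV. \<bar>c i\<bar>) * emeasure lebesgue (h -` A)" .
qed

lemma finite_funs_into: "finite X \<Longrightarrow> finite {\<alpha> :: 'a::finite \<Rightarrow> 'b. \<forall>a. \<alpha> a \<in> X}"
proof -
  assume "finite X"
  moreover have "{\<alpha> :: 'a \<Rightarrow> 'b. \<forall>a. \<alpha> a \<in> X} = UNIV \<rightarrow>\<^sub>E X" by (auto simp: PiE_def Pi_def)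
  ultimately show ?thesis by (simp add: finite_PiE)
qed

lemma det_in_Ints:
  fixes A :: "real^'n^'n"
  assumes "\<And>i j. A$i$j \<in> \<int>"
  shows "det A \<in> \<int>"
  unfolding det_def by (intro Ints_sum Ints_mult Ints_prod) (auto simp: assms sign_def)

lemma full_rank_obtains_invertible_columns:
  fixes A :: "real^'m^'r"
  assumes "rank A = CARD('r)"
  obtains \<sigma> :: "'r \<Rightarrow> 'm" where "inj \<sigma>" "det (\<chi> i k. A$i$(\<sigma> k)) \<noteq> 0"
proof -
  obtain B where B: "B \<subseteq> columns A" "independent B" "columns A \<subseteq> span B"
    by (rule maximal_independent_subset)
  have card_B: "card B = CARD('r)"
    using basis_card_eq_dim[OF B(1,3,2)] assms by (simp add: column_rank_def)
  then have "finite B" by (simp add: card_ge_0_finite)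
  then obtain \<psi> :: "'r \<Rightarrow> real^'r" where \<psi>: "bij_betw \<psi> UNIV B"
    using finite_same_card_bij[of "UNIV :: 'r set" B] card_B by auto
  have "\<forall>b\<in>B. \<exists>a. column a A = b" using B(1) by (auto simp: columns_def)
  then obtain \<tau> where \<tau>: "\<And>b. b \<in> B \<Longrightarrow> column (\<tau> b) A = b" by metis
  define \<sigma> where "\<sigma> k = \<tau> (\<psi> k)" for k
  define M where "M = (\<chi> i k. A$i$(\<sigma> k))"
  have column_\<sigma>: "column (\<sigma> k) A = \<psi> k" for k
    using \<tau> \<psi> by (auto simp: \<sigma>_def bij_betw_def)
  then have column_M: "column k M = \<psi> k" for k
    by (simp add: M_def column_def)
  have "inj \<sigma>"
  proof (rule injI)
    fix k k' assume "\<sigma> k = \<sigma> k'"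
    then have "\<psi> k = \<psi> k'" by (metis column_\<sigma>)
    then show "k = k'" using \<psi> by (auto simp: bij_betw_def inj_on_def)
  qed
  moreover have "rank M = CARD('r)"
  proof -
    have "columns M = B"
      using \<psi> column_M by (auto simp: columns_def bij_betw_def)
    then show ?thesis
      using card_B B(2) by (simp add: column_rank_def dim_eq_card_independent)
  qed
  ultimately show ?thesis
    using that[of \<sigma>] by (simp add: M_def det_eq_0_rank)
qed

lemma integer_matrix_scaled_inverse:
  fixes M :: "real^'n^'n"
  assumes M: "\<And>i j. M$i$j \<in> \<int>" and det: "det M \<noteq> 0"
  obtains N where "\<And>i j. N$i$j \<in> \<int>" "M ** N = det M *\<^sub>R mat 1"
proof
  define N where "N = (\<chi> k i. det (\<chi> a b. if b = k then axis i 1 $ a else M$a$b))"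
  show "N$k$i \<in> \<int>" for k i
    unfolding N_def by (simp, rule det_in_Ints) (auto simp: M axis_def)
  have "M *v ((1 / det M) *\<^sub>R column i N) = axis i 1" for i
    using cramer[OF det, of "(1 / det M) *\<^sub>R column i N" "axis i 1"]
    by (simp add: N_def column_def vec_eq_iff field_simps)
  moreover have "column i N = det M *\<^sub>R ((1 / det M) *\<^sub>R column i N)" for i
    using det by simp
  ultimately have "M *v column i N = det M *\<^sub>R axis i 1" for i
    by (metis matrix_vector_mult_scaleR)
  moreover have "(M ** N)$a$i = (M *v column i N)$a" for a i
    by (simp add: matrix_matrix_mult_def matrix_vector_mult_def column_def)
  ultimately show "M ** N = det M *\<^sub>R mat 1"
    by (simp add: vec_eq_iff axis_def mat_def)
qed

lemma sum_UNIV_inj_support: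
  fixes \<sigma> :: "'k::finite \<Rightarrow> 'a::finite"
  assumes "inj \<sigma>" "\<And>a. a \<notin> range \<sigma> \<Longrightarrow> f a = 0"
  shows "(\<Sum>a\<in>UNIV. f a) = (\<Sum>k\<in>UNIV. f (\<sigma> k))"
proof -
  have "(\<Sum>a\<in>UNIV. f a) = (\<Sum>a\<in>range \<sigma>. f a)"
    using assms(2) by (intro sum.mono_neutral_right) auto
  also have "\<dots> = (\<Sum>k\<in>UNIV. f (\<sigma> k))"
    using assms(1) by (simp add: sum.reindex)
  finally show ?thesis .
qed

locale int_right_inverse =
  fixes L :: "int^'m^'r" and S :: "'m set" and E :: "real^'r^'m" and d :: real
  assumes d_ge_1: "d \<ge> 1" and d_Ints: "d \<in> \<int>" and card_S: "card S = CARD('r)"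
    and E_Ints: "\<And>a i. E$a$i \<in> \<int>" and E_outside: "\<And>a i. a \<notin> S \<Longrightarrow> E$a$i = 0"
    and L_E: "realmat L ** E = d *\<^sub>R mat 1"
    and L_inj_on_S: "\<And>y. (\<And>a. a \<notin> S \<Longrightarrow> y$a = 0) \<Longrightarrow> realmat L *v y = 0 \<Longrightarrow> y = 0"

lemma full_rank_obtains_int_right_inverse:
  fixes L :: "int^'m^'r"
  assumes "rank (realmat L) = CARD('r)"
  obtains S E d where "int_right_inverse L S E d"
proof -
  define R where "R = realmat L"
  have R_Ints: "R$i$a \<in> \<int>" for i a by (simp add: R_def realmat_def)
  obtain \<sigma> :: "'r \<Rightarrow> 'm" where \<sigma>: "inj \<sigma>" and det: "det (\<chi> i k. R$i$(\<sigma> k)) \<noteq> 0"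
    using full_rank_obtains_invertible_columns assms unfolding R_def by blast
  define M where "M = (\<chi> i k. R$i$(\<sigma> k))"
  obtain N where N_Ints: "\<And>i j. N$i$j \<in> \<int>" and M_N: "M ** N = det M *\<^sub>R mat 1"
    using integer_matrix_scaled_inverse[of M] R_Ints det by (auto simp: M_def)
  define S where "S = range \<sigma>"
  define E where "E = (\<chi> a i. if a \<in> S then sgn (det M) * N$(inv \<sigma> a)$i else 0)"
  have det_Ints: "det M \<in> \<int>" by (rule det_in_Ints) (simp add: M_def R_Ints)
  show thesis
  proof (rule that, unfold_locales)
    show "1 \<le> \<bar>det M\<bar>" using Ints_nonzero_abs_ge1 det_Ints det by (simp add: M_def)
    show "\<bar>det M\<bar> \<in> \<int>" using det_Ints by simp
    show "card S = CARD('r)" using \<sigma> by (simp add: S_def card_image)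
    show "E$a$i \<in> \<int>" for a i using N_Ints by (simp add: E_def sgn_real_def)
    show "a \<notin> S \<Longrightarrow> E$a$i = 0" for a i by (simp add: E_def)
    have "(R ** E)$i$i' = sgn (det M) * (M ** N)$i$i'" for i i'
    proof -
      have "(R ** E)$i$i' = (\<Sum>k\<in>UNIV. R$i$(\<sigma> k) * E$(\<sigma> k)$i')"
        unfolding matrix_matrix_mult_def using \<sigma> by (simp add: sum_UNIV_inj_support E_def S_def)
      also have "\<dots> = sgn (det M) * (M ** N)$i$i'"
        using \<sigma> by (simp add: E_def S_def M_def matrix_matrix_mult_def sum_distrib_left mult_ac)
      finally show ?thesis .
    qed
    then show "realmat L ** E = \<bar>det M\<bar> *\<^sub>R mat 1"
      by (simp add: M_N vec_eq_iff mat_def abs_sgn flip: R_def)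
    fix y assume y_S: "\<And>a. a \<notin> S \<Longrightarrow> y$a = 0" and y_ker: "realmat L *v y = 0"
    have "M *v (\<chi> k. y$(\<sigma> k)) = R *v y"
      using \<sigma> y_S by (simp add: vec_eq_iff matrix_vector_mult_def M_def sum_UNIV_inj_support S_def)
    then have "(\<chi> k. y$(\<sigma> k)) = 0"
      using inj_matrix_vector_mult[of M] det y_ker
      by (metis M_def R_def invertible_det_nz injD matrix_vector_mult_0_right)
    then show "y = 0"
      using y_S unfolding vec_eq_iff S_def by (metis rangeE vec_lambda_beta zero_index)
  qed
qed

context int_right_inverse
begin

abbreviation R :: "real^'m^'r" where
  "R \<equiv> realmat L"

abbreviation K :: "(real^'m) set" where
  "K \<equiv> kerT L"

definition Q :: "real^'m^'m" where
  "Q = d *\<^sub>R mat 1 - E ** R"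

lemma R_Ints: "R$i$a \<in> \<int>"
  by (simp add: realmat_def)

lemma Q_Ints: "Q$a$b \<in> \<int>"
  unfolding Q_def matrix_matrix_mult_def using d_Ints E_Ints R_Ints
  by (simp add: mat_def Ints_sum)

lemma R_E_mult: "R *v (E *v z) = d *\<^sub>R z"
  by (simp add: matrix_vector_mul_assoc L_E flip: scaleR_matrix_vector_assoc)

lemma Q_mult: "Q *v u = d *\<^sub>R u - E *v (R *v u)"
  by (simp add: Q_def matrix_vector_mult_diff_rdistrib matrix_vector_mul_assoc
      flip: scaleR_matrix_vector_assoc)

lemma R_Q_mult: "R *v (Q *v u) = 0"
  by (simp add: Q_mult matrix_vector_mult_diff_distrib R_E_mult matrix_vector_mult_scaleR)

lemma Q_mult_outside: "a \<notin> S \<Longrightarrow> (Q *v u)$a = d * u$a"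
  unfolding Q_mult by (simp add: matrix_vector_mult_def E_outside)

lemma Q_column_S: "b \<in> S \<Longrightarrow> Q$a$b = 0"
proof -
  assume b: "b \<in> S"
  have "Q *v axis b 1 = 0"
  proof (rule L_inj_on_S)
    show "(Q *v axis b 1)$a = 0" if "a \<notin> S" for a
      using b that by (auto simp: Q_mult_outside axis_def)
  qed (rule R_Q_mult)
  then show ?thesis
    by (metis column_def matrix_vector_mult_basis vec_lambda_beta zero_index)
qed

lemma Q_mult_restrict: "Q *v u = Q *v (\<chi> a. if a \<in> S then 0 else u$a)"
  by (auto simp: matrix_vector_mult_def vec_eq_iff Q_column_S intro!: sum.cong)

definition F :: "(real^'m) set" where
  "F = {frac_vec ((1 / d) *\<^sub>R (E *v z)) | z. int_vec z}"

definition param :: "(real^'m) \<times> (real^'m) \<Rightarrow> real^'m" where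
  "param z = tadd (fst z) (Q *v snd z)"

lemma F_torus: "f \<in> F \<Longrightarrow> f \<in> torus"
  by (auto simp: F_def)

lemma F_outside: "f \<in> F \<Longrightarrow> a \<notin> S \<Longrightarrow> f$a = 0"
  by (auto simp: F_def frac_vec_def matrix_vector_mult_def E_outside)

lemma F_obtains_int_vec:
  assumes "f \<in> F"
  obtains z where "int_vec z" "int_vec (f - (1 / d) *\<^sub>R (E *v z))"
  using assms by (auto simp: F_def)

lemma F_scaled_Ints: "f \<in> F \<Longrightarrow> d * f$a \<in> \<int>"
proof -
  assume "f \<in> F"
  then obtain z where z: "int_vec z" "int_vec (f - (1 / d) *\<^sub>R (E *v z))"
    by (rule F_obtains_int_vec)
  have "d * f$a = d * (f - (1 / d) *\<^sub>R (E *v z))$a + (E *v z)$a"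
    using d_ge_1 by (simp add: field_simps)
  moreover have "int_vec (E *v z)" using z(1) E_Ints by blast
  ultimately show ?thesis
    using z(2) d_Ints by (simp add: int_vec_def)
qed

lemma F_R_int_vec: "f \<in> F \<Longrightarrow> int_vec (R *v f)"
proof -
  assume "f \<in> F"
  then obtain z where z: "int_vec z" "int_vec (f - (1 / d) *\<^sub>R (E *v z))"
    by (rule F_obtains_int_vec)
  have "R *v f = R *v (f - (1 / d) *\<^sub>R (E *v z)) + z"
    using d_ge_1 by (simp add: matrix_vector_mult_diff_distrib matrix_vector_mult_scaleR R_E_mult)
  then show ?thesis using z R_Ints by (metis int_vec_add int_vec_matrix_vector_mult)
qed

lemma zero_in_F: "0 \<in> F"
proof -
  have "frac_vec ((1 / d) *\<^sub>R (E *v 0)) = 0" by (simp add: frac_vec_def vec_eq_iff)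
  then show ?thesis unfolding F_def by (metis (mono_tags) CollectI int_vec_def zero_index Ints_0)
qed

lemma finite_F: "finite F"
proof -
  define V where "V = (\<lambda>k. real k / d) ` {..<nat \<lceil>d\<rceil>}"
  have "F \<subseteq> (\<lambda>h. \<chi> a. h a) ` (UNIV \<rightarrow>\<^sub>E V)"
  proof
    fix f assume f: "f \<in> F"
    have "f$a \<in> V" for a
    proof -
      obtain k where k: "d * f$a = of_int k" using F_scaled_Ints[OF f] by (auto elim: Ints_cases)
      have "0 \<le> f$a" "f$a < 1" using F_torus[OF f] by (auto simp: torus_def)
      then have "0 \<le> d * f$a" "d * f$a < d * 1"
        using d_ge_1 by (auto intro: mult_strict_left_mono)
      then have "0 \<le> k" "real_of_int k < d" using k by simp_all
      then have "nat k < nat \<lceil>d\<rceil>" by (simp add: less_ceiling_iff)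
      moreover have "f$a = real (nat k) / d" using k d_ge_1 \<open>0 \<le> k\<close> by (simp add: field_simps)
      ultimately show ?thesis by (auto simp: V_def)
    qed
    then show "f \<in> (\<lambda>h. \<chi> a. h a) ` (UNIV \<rightarrow>\<^sub>E V)"
      by (intro image_eqI[of _ _ "\<lambda>a. f$a"]) auto
  qed
  moreover have "finite ((\<lambda>h. \<chi> a. h a) ` (UNIV \<rightarrow>\<^sub>E V))"
    by (intro finite_imageI finite_PiE) (auto simp: V_def)
  ultimately show ?thesis by (rule finite_subset)
qed

lemma F_tadd: "f \<in> F \<Longrightarrow> f' \<in> F \<Longrightarrow> tadd f f' \<in> F"
proof -
  assume "f \<in> F" "f' \<in> F"
  then obtain z z' where z: "int_vec z" "int_vec (f - (1 / d) *\<^sub>R (E *v z))"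
    and z': "int_vec z'" "int_vec (f' - (1 / d) *\<^sub>R (E *v z'))"
    by (metis F_obtains_int_vec)
  have "tadd f f' = frac_vec ((1 / d) *\<^sub>R (E *v (z + z')))"
  proof (unfold tadd_eq_frac_vec, rule frac_vec_eqI)
    have "f + f' - (1 / d) *\<^sub>R (E *v (z + z'))
        = (f - (1 / d) *\<^sub>R (E *v z)) + (f' - (1 / d) *\<^sub>R (E *v z'))"
      by (simp add: algebra_simps)
    then show "int_vec (f + f' - (1 / d) *\<^sub>R (E *v (z + z')))"
      using z(2) z'(2) by (metis int_vec_add)
  qed
  then show ?thesis using z z' unfolding F_def by blast
qed

lemma bij_betw_tadd_F: "f' \<in> F \<Longrightarrow> bij_betw (\<lambda>f. tadd f f') F F"
proof -
  assume f': "f' \<in> F"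
  have inj: "inj_on (\<lambda>f. tadd f f') F"
    by (rule inj_onI) (use F_torus tadd_right_cancel in blast)
  moreover have "(\<lambda>f. tadd f f') ` F \<subseteq> F" using F_tadd f' by auto
  ultimately have "(\<lambda>f. tadd f f') ` F = F"
    using card_subset_eq[OF finite_F] card_image[OF inj] by metis
  then show ?thesis using inj by (simp add: bij_betw_def)
qed

lemma param_in_kerT: "fst z \<in> F \<Longrightarrow> param z \<in> K"
proof -
  assume f: "fst z \<in> F"
  let ?w = "fst z + Q *v snd z"
  have "R *v frac_vec ?w = R *v (frac_vec ?w - ?w) + R *v fst z"
    by (simp add: matrix_vector_mult_diff_distrib matrix_vector_right_distrib R_Q_mult)
  moreover have "int_vec (R *v (frac_vec ?w - ?w))" using R_Ints by blast
  ultimately have "int_vec (R *v frac_vec ?w)" using F_R_int_vec[OF f] by auto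
  then show ?thesis by (simp add: param_def tadd_eq_frac_vec kerT_def int_vec_def)
qed

lemma param_tadd: "tadd (param (f, u)) (param (f', u')) = param (tadd f f', tadd u u')"
proof -
  have "tadd (param (f, u)) (param (f', u')) = frac_vec (f + f' + Q *v u + Q *v u')"
    unfolding param_def tadd_eq_frac_vec fst_conv snd_conv
  proof (rule frac_vec_eqI)
    have "frac_vec (f + Q *v u) + frac_vec (f' + Q *v u') - (f + f' + Q *v u + Q *v u')
       = (frac_vec (f + Q *v u) - (f + Q *v u)) + (frac_vec (f' + Q *v u') - (f' + Q *v u'))"
      by simp
    then show "int_vec (frac_vec (f + Q *v u) + frac_vec (f' + Q *v u') - (f + f' + Q *v u + Q *v u'))"
      by (metis int_vec_add int_vec_frac_vec_diff)
  qed
  also have "\<dots> = param (tadd f f', tadd u u')"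
    unfolding param_def tadd_eq_frac_vec fst_conv snd_conv
  proof (rule frac_vec_eqI)
    have "f + f' + Q *v u + Q *v u' - (frac_vec (f + f') + Q *v frac_vec (u + u'))
       = - ((frac_vec (f + f') - (f + f')) + Q *v (frac_vec (u + u') - (u + u')))"
      by (simp add: algebra_simps)
    then show "int_vec (f + f' + Q *v u + Q *v u' - (frac_vec (f + f') + Q *v frac_vec (u + u')))"
      using Q_Ints by (metis int_vec_add int_vec_frac_vec_diff int_vec_matrix_vector_mult int_vec_uminus)
  qed
  finally show ?thesis .
qed

lemma param_surj: "k \<in> K \<Longrightarrow> \<exists>f\<in>F. \<exists>u\<in>torus. param (f, u) = k"
proof -
  assume k: "k \<in> K"
  define z where "z = R *v k"
  define f where "f = frac_vec ((1 / d) *\<^sub>R (E *v z))"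
  define u where "u = (1 / d) *\<^sub>R k"
  have "int_vec z" using k by (simp add: kerT_def z_def int_vec_def)
  then have "f \<in> F" unfolding F_def f_def by blast
  have k_torus: "k \<in> torus" using k by (simp add: kerT_def)
  then have "u \<in> torus"
    using d_ge_1 by (auto simp: u_def torus_def divide_less_eq intro: order_less_le_trans)
  have "param (f, u) = frac_vec k"
    unfolding param_def tadd_eq_frac_vec fst_conv snd_conv
  proof (rule frac_vec_eqI)
    have "Q *v u = k - (1 / d) *\<^sub>R (E *v z)"
      using d_ge_1 by (simp add: u_def Q_mult z_def algebra_simps)
    then show "int_vec (f + Q *v u - k)" by (simp add: f_def int_vec_frac_vec_diff)
  qed
  then show ?thesis using \<open>f \<in> F\<close> \<open>u \<in> torus\<close> k_torus by auto
qed

lemma borel_measurable_param_slice: "(\<lambda>u. param (f, u)) \<in> borel_measurable borel"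
  unfolding param_def
  by (intro borel_measurable_tadd borel_measurable_continuous_onI continuous_intros)
    (simp_all add: linear_continuous_on)

lemma lebesgue_measurable_param_slice: "(\<lambda>u. param (f, u)) \<in> borel_measurable lebesgue_torus"
  by (intro measurable_restrict_space1 measurable_completion)
    (simp add: borel_measurable_param_slice)

lemma param_slice_sets: "A \<in> sets borel \<Longrightarrow> {u \<in> torus. param (f, u) \<in> A} \<in> sets lebesgue"
  using measurable_sets[OF lebesgue_measurable_param_slice]
  by (simp add: sets_restrict_space_iff vimage_def Collect_conj_eq Int_commute)

definition domain_measure :: "((real^'m) \<times> (real^'m)) measure" where
  "domain_measure = uniform_count_measure F \<Otimes>\<^sub>M lebesgue_torus"

definition image_measure :: "(real^'m) measure" where
  "image_measure = distr domain_measure (restrict_space borel K) param"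

lemma prob_space_domain_measure: "prob_space domain_measure"
  unfolding domain_measure_def using finite_F zero_in_F
  by (intro prob_space_pair prob_space_uniform_count_measure prob_space_lebesgue_torus) auto

lemma space_domain_measure: "space domain_measure = F \<times> torus"
  by (simp add: domain_measure_def space_pair_measure space_uniform_count_measure)

lemma measurable_param: "param \<in> domain_measure \<rightarrow>\<^sub>M restrict_space borel K"
proof (rule measurable_restrict_space2)
  have "param \<in> borel_measurable (count_space F \<Otimes>\<^sub>M lebesgue_torus)"
    by (rule measurable_pair_measure_countable1)
      (auto intro: countable_finite finite_F lebesgue_measurable_param_slice)
  then show "param \<in> borel_measurable domain_measure"
    unfolding domain_measure_def by (simp add: measurable_cong_sets[OF sets_pair_measure_cong
          [OF sets_uniform_count_measure_count_space refl] refl])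
qed (auto simp: space_domain_measure param_in_kerT)

lemma prob_space_image_measure: "prob_space image_measure"
  unfolding image_measure_def
  by (rule prob_space.prob_space_distr[OF prob_space_domain_measure measurable_param])

lemma sets_image_measure: "sets image_measure = sets (restrict_space borel K)"
  by (simp add: image_measure_def)

lemma emeasure_image_measure:
  assumes "A \<in> sets borel" "A \<subseteq> K"
  shows "emeasure image_measure A
    = (\<Sum>f\<in>F. ennreal (1 / card F) * emeasure lebesgue {u \<in> torus. param (f, u) \<in> A})"
proof -
  interpret T: prob_space lebesgue_torus by (rule prob_space_lebesgue_torus)
  let ?Z = "param -` A \<inter> space domain_measure"
  have A: "A \<in> sets (restrict_space borel K)"
    using assms kerT_borel[of L] by (simp add: sets_restrict_space_iff)
  have Z: "?Z \<in> sets (uniform_count_measure F \<Otimes>\<^sub>M lebesgue_torus)"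
    using measurable_sets[OF measurable_param A] by (simp add: domain_measure_def)
  have "emeasure image_measure A = emeasure domain_measure ?Z"
    unfolding image_measure_def by (rule emeasure_distr[OF measurable_param A])
  also have "\<dots> = (\<integral>\<^sup>+f. emeasure lebesgue_torus (Pair f -` ?Z) \<partial>uniform_count_measure F)"
    unfolding domain_measure_def by (rule T.emeasure_pair_measure_alt[OF Z[unfolded domain_measure_def]])
  also have "\<dots> = (\<Sum>f\<in>F. ennreal (1 / card F) * emeasure lebesgue_torus (Pair f -` ?Z))"
    using finite_F by (simp add: uniform_count_measure_def nn_integral_point_measure_finite)
  also have "\<dots> = (\<Sum>f\<in>F. ennreal (1 / card F) * emeasure lebesgue {u \<in> torus. param (f, u) \<in> A})"
  proof (rule sum.cong[OF refl])
    fix f assume "f \<in> F"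
    then have "Pair f -` ?Z = {u \<in> torus. param (f, u) \<in> A}"
      by (auto simp: space_domain_measure)
    then show "ennreal (1 / card F) * emeasure lebesgue_torus (Pair f -` ?Z)
        = ennreal (1 / card F) * emeasure lebesgue {u \<in> torus. param (f, u) \<in> A}"
      by (simp add: emeasure_restrict_space)
  qed
  finally show ?thesis .
qed

lemma emeasure_image_measure_translate:
  assumes k: "k \<in> K" and A: "A \<in> sets image_measure"
  shows "emeasure image_measure {x \<in> K. tadd x k \<in> A} = emeasure image_measure A"
proof -
  have A_borel: "A \<in> sets borel" "A \<subseteq> K"
    using A kerT_borel[of L] by (simp_all add: sets_image_measure sets_restrict_space_iff)
  define A' where "A' = {x \<in> K. tadd x k \<in> A}"
  have "A' = K \<inter> ((\<lambda>x. tadd x k) -` A \<inter> space borel)" by (auto simp: A'_def)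
  also have "\<dots> \<in> sets borel"
  proof (rule sets.Int[OF kerT_borel measurable_sets[OF _ A_borel(1)]])
    show "(\<lambda>x. tadd x k) \<in> borel_measurable borel" by (intro borel_measurable_tadd) auto
  qed
  finally have A'_borel: "A' \<in> sets borel" .
  obtain f0 u0 where f0: "f0 \<in> F" and u0: "u0 \<in> torus" and k_eq: "param (f0, u0) = k"
    using param_surj[OF k] by blast
  let ?slice = "\<lambda>A f. {u \<in> torus. param (f, u) \<in> A}"
  have slice_A': "?slice A' f = {u \<in> torus. tadd u u0 \<in> ?slice A (tadd f f0)}" if "f \<in> F" for f
    using that param_in_kerT[of "(f, _)"] by (auto simp: A'_def simp flip: k_eq param_tadd)
  have "emeasure image_measure A' = (\<Sum>f\<in>F. ennreal (1 / card F) * emeasure lebesgue (?slice A' f))"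
    using A'_borel by (simp add: emeasure_image_measure A'_def)
  also have "\<dots> = (\<Sum>f\<in>F. ennreal (1 / card F) * emeasure lebesgue (?slice A (tadd f f0)))"
    using lebesgue_torus_translate(2)[OF _ param_slice_sets[OF A_borel(1)] u0]
    by (intro sum.cong) (auto simp: slice_A')
  also have "\<dots> = (\<Sum>f\<in>F. ennreal (1 / card F) * emeasure lebesgue (?slice A f))"
    using sum.reindex_bij_betw[OF bij_betw_tadd_F[OF f0]] .
  also have "\<dots> = emeasure image_measure A"
    using A_borel by (simp add: emeasure_image_measure)
  finally show ?thesis by (simp add: A'_def)
qed

lemma muL_eq_image_measure: "muL L = image_measure"
  by (intro haar_eqI kerT_borel)
    (simp add: haar_measure_on_def prob_space_image_measure sets_image_measure
      emeasure_image_measure_translate)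

definition d_int :: int where
  "d_int = \<lfloor>d\<rfloor>"

lemma d_eq: "d = of_int d_int"
  using d_Ints by (auto simp: d_int_def elim: Ints_cases)

lemma d_int_ge_1: "d_int \<ge> 1"
  using d_ge_1 d_eq by linarith

lemma card_Compl_S: "card (- S) = CARD('m) - CARD('r)"
  using card_S by (simp add: Compl_eq_Diff_UNIV card_Diff_subset)

definition cell :: "('m \<Rightarrow> int) \<Rightarrow> (real^'m) set" where
  "cell \<alpha> = {w \<in> torus. \<forall>s\<in>S. \<lfloor>(Q *v w)$s\<rfloor> = \<alpha> s}"

definition Q_norm :: int where
  "Q_norm = \<lceil>\<Sum>a\<in>UNIV. \<Sum>b\<in>UNIV. \<bar>Q$a$b\<bar>\<rceil>"

definition cell_indices :: "('m \<Rightarrow> int) set" where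
  "cell_indices = {\<alpha>. \<forall>a. \<alpha> a \<in> {-Q_norm..Q_norm}}"

definition digit_indices :: "('m \<Rightarrow> int) set" where
  "digit_indices = {n. \<forall>a. n a \<in> {0..<d_int}}"

text \<open>The \<open>1\<close> keeps the minimum well defined when no cell has positive measure.\<close>

definition min_cell_measure :: real where
  "min_cell_measure = Min (insert 1
     {measure lebesgue (cell \<alpha>) | \<alpha>. \<alpha> \<in> cell_indices \<and> 0 < measure lebesgue (cell \<alpha>)})"

lemma finite_cell_indices: "finite cell_indices"
  unfolding cell_indices_def by (rule finite_funs_into) simp

lemma finite_digit_indices: "finite digit_indices"
  unfolding digit_indices_def by (rule finite_funs_into) simp

lemma cell_torus: "cell \<alpha> \<subseteq> torus"
  by (auto simp: cell_def)

lemma cell_borel: "cell \<alpha> \<in> sets borel"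
proof -
  have "(\<lambda>w. (Q *v w)$s) \<in> borel_measurable (borel :: (real^'m) measure)" for s
    by (intro borel_measurable_continuous_onI continuous_intros)
  then have "{w. \<lfloor>(Q *v w)$s\<rfloor> = \<alpha> s} \<in> sets (borel :: (real^'m) measure)" for s
    by measurable
  moreover have "cell \<alpha> = torus \<inter> (\<Inter>s\<in>S. {w. \<lfloor>(Q *v w)$s\<rfloor> = \<alpha> s})"
    by (auto simp: cell_def)
  ultimately show ?thesis by auto
qed

lemma min_cell_measure_pos: "min_cell_measure > 0"
  unfolding min_cell_measure_def using finite_cell_indices
  by (subst Min_gr_iff) auto

lemma min_cell_measure_le:
  "\<alpha> \<in> cell_indices \<Longrightarrow> 0 < measure lebesgue (cell \<alpha>) \<Longrightarrow> min_cell_measure \<le> measure lebesgue (cell \<alpha>)"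
  unfolding min_cell_measure_def using finite_cell_indices by (intro Min_le) auto

lemma abs_Q_mult_le: "w \<in> torus \<Longrightarrow> \<bar>(Q *v w)$a\<bar> \<le> of_int Q_norm"
proof -
  assume w: "w \<in> torus"
  have "\<bar>(Q *v w)$a\<bar> \<le> (\<Sum>b\<in>UNIV. \<bar>Q$a$b * w$b\<bar>)"
    unfolding matrix_vector_mult_def by simp
  also have "\<dots> \<le> (\<Sum>b\<in>UNIV. \<bar>Q$a$b\<bar>)"
  proof (rule sum_mono)
    fix b
    have "\<bar>w$b\<bar> \<le> 1" using w by (auto simp: torus_def dest!: spec[of _ b])
    then show "\<bar>Q$a$b * w$b\<bar> \<le> \<bar>Q$a$b\<bar>"
      by (simp add: abs_mult mult_left_le)
  qed
  also have "\<dots> \<le> (\<Sum>a'\<in>UNIV. \<Sum>b\<in>UNIV. \<bar>Q$a'$b\<bar>)"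
    by (rule member_le_sum) (auto intro: sum_nonneg)
  also have "\<dots> \<le> of_int Q_norm"
    unfolding Q_norm_def by (rule le_of_int_ceiling)
  finally show ?thesis .
qed

definition rescale :: "nat \<Rightarrow> nat^'m \<Rightarrow> ('m \<Rightarrow> int) \<Rightarrow> real^'m \<Rightarrow> real^'m" where
  "rescale p j n u =
     (\<chi> a. if a \<in> S then u$a else d * real p * u$a - real (j$a) - real p * of_int (n a))"

definition shift :: "nat \<Rightarrow> nat^'m \<Rightarrow> ('m \<Rightarrow> int) \<Rightarrow> real^'m" where
  "shift p j n = (\<chi> a. if a \<in> S then 0 else real (j$a) + real p * of_int (n a))"

lemma emeasure_rescale_vimage:
  assumes p: "p \<ge> 1" and A: "A \<in> sets lebesgue"
  shows "rescale p j n -` A \<in> sets lebesgue"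
    and "emeasure lebesgue A
      = ennreal ((d * real p) ^ card (- S)) * emeasure lebesgue (rescale p j n -` A)"
proof -
  define c where "c i = (if i \<in> S then 1 else d * real p)" for i
  have c: "c i \<noteq> 0" for i using p d_ge_1 by (simp add: c_def)
  have rescale_eq: "rescale p j n = (\<lambda>x. \<chi> i. c i * x$i + (- shift p j n)$i)"
    by (auto simp: rescale_def shift_def c_def vec_eq_iff)
  note affine = emeasure_lebesgue_vec_affine[where c = c and t = "- shift p j n", OF c A]
  show "rescale p j n -` A \<in> sets lebesgue"
    unfolding rescale_eq by (rule affine(1))
  have "(\<Prod>i\<in>UNIV. \<bar>c i\<bar>) = (\<Prod>i\<in>- S. d * real p)"
    using d_ge_1 by (simp add: c_def prod.If_cases Compl_eq_Diff_UNIV)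
  then show "emeasure lebesgue A
      = ennreal ((d * real p) ^ card (- S)) * emeasure lebesgue (rescale p j n -` A)"
    using affine(2) by (simp add: rescale_eq)
qed

lemma rescale_in_torus_imp:
  assumes p: "p \<ge> 1" and j: "\<forall>i. j$i < p" and n: "n \<in> digit_indices"
    and w: "rescale p j n u \<in> torus"
  shows "u \<in> torus"
proof -
  have "0 \<le> u$a \<and> u$a < 1" for a
  proof (cases "a \<in> S")
    case True
    then show ?thesis using w by (auto simp: torus_def rescale_def dest!: spec[of _ a])
  next
    case False
    define w_a where "w_a = d * real p * u$a - real (j$a) - real p * of_int (n a)"
    have "0 \<le> w_a" "w_a < 1"
      using w False by (auto simp: torus_def rescale_def w_a_def dest!: spec[of _ a])
    moreover have "0 \<le> real_of_int (n a)" "real_of_int (n a) \<le> d - 1"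
      using n d_eq by (auto simp: digit_indices_def dest!: spec[of _ a])
    then have "0 \<le> real p * of_int (n a)" "real p * of_int (n a) \<le> real p * (d - 1)"
      by (simp_all add: mult_left_mono)
    moreover have "real (j$a) \<le> real p - 1" using j[rule_format, of a] by linarith
    ultimately have "0 \<le> d * real p * u$a" "d * real p * u$a < d * real p * 1"
      by (auto simp: w_a_def algebra_simps)
    moreover have "0 < d * real p" using d_ge_1 p by simp
    ultimately show ?thesis
      by (metis zero_le_mult_iff not_less mult_less_cancel_left_pos)
  qed
  then show ?thesis by (simp add: torus_def)
qed

definition offset :: "nat \<Rightarrow> nat^'m \<Rightarrow> ('m \<Rightarrow> int) \<Rightarrow> real^'m \<Rightarrow> real^'m" where
  "offset p j n f = (d * real p) *\<^sub>R f + Q *v shift p j n"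

lemma offset_Ints: "f \<in> F \<Longrightarrow> offset p j n f $ a \<in> \<int>"
proof -
  assume f: "f \<in> F"
  have "(d * real p) * f$a = real p * (d * f$a)" by simp
  then have "(d * real p) * f$a \<in> \<int>" using F_scaled_Ints[OF f] by (metis Ints_mult Ints_of_nat)
  moreover have "int_vec (Q *v shift p j n)"
    using Q_Ints by (intro int_vec_matrix_vector_mult) (auto simp: int_vec_def shift_def)
  ultimately show ?thesis by (simp add: offset_def int_vec_def)
qed

lemma scaled_param_eq:
  assumes p: "p \<ge> 1"
  shows "real p *\<^sub>R (f + Q *v u) = (1 / d) *\<^sub>R (offset p j n f + Q *v rescale p j n u)"
proof -
  let ?w = "rescale p j n u"
  let ?outside = "\<lambda>x. \<chi> a. if a \<in> S then 0 else x$a"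
  have dp: "d * real p \<noteq> 0" using d_ge_1 p by simp
  have "Q *v u = Q *v ?outside u" by (rule Q_mult_restrict)
  also have "?outside u = (1 / (d * real p)) *\<^sub>R (?outside ?w + shift p j n)"
    using dp by (auto simp: vec_eq_iff rescale_def shift_def field_simps)
  also have "Q *v \<dots> = (1 / (d * real p)) *\<^sub>R (Q *v ?w + Q *v shift p j n)"
    by (simp add: matrix_vector_mult_scaleR matrix_vector_right_distrib flip: Q_mult_restrict)
  finally show ?thesis
    using dp by (simp add: offset_def vec_eq_iff field_simps)
qed

text \<open>The floor depends on \<open>u\<close> only through the cell containing its rescaling.\<close>

lemma floor_scaled_param:
  assumes p: "p \<ge> 1" and f: "f \<in> F" and w: "rescale p j n u \<in> cell \<alpha>"
  shows "\<lfloor>real p * (f$a + (Q *v u)$a)\<rfloor> =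
    (if a \<in> S then (\<lfloor>offset p j n f $ a\<rfloor> + \<alpha> a) div d_int else int (j$a) + int p * n a)"
proof -
  let ?w = "rescale p j n u"
  let ?B = "offset p j n f"
  have scaled: "real p * (f$a + (Q *v u)$a) = (1 / d) * (?B$a + (Q *v ?w)$a)"
    using arg_cong[OF scaled_param_eq[OF p, of f u j n], of "\<lambda>x. x $ a"]
    by (simp only: vector_scaleR_component vector_add_component real_scaleR_def)
  obtain b where b: "?B$a = of_int b" using offset_Ints[OF f, of p j n a] by (blast elim: Ints_cases)
  show ?thesis
  proof (cases "a \<in> S")
    case True
    have "real p * (f$a + (Q *v u)$a) = (of_int b + (Q *v ?w)$a) / of_int d_int"
      using scaled b by (simp flip: d_eq)
    then have "\<lfloor>real p * (f$a + (Q *v u)$a)\<rfloor> = \<lfloor>of_int b + (Q *v ?w)$a\<rfloor> div d_int"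
      using d_int_ge_1 floor_divide_real_eq_div[of d_int] by simp
    also have "\<lfloor>of_int b + (Q *v ?w)$a\<rfloor> = b + \<alpha> a"
      using True w by (simp add: cell_def)
    finally show ?thesis using True b by simp
  next
    case False
    have w01: "0 \<le> ?w$a" "?w$a < 1" using w by (auto simp: cell_def torus_def)
    have "?B$a = d * shift p j n $ a"
      using F_outside[OF f False] False by (simp add: offset_def Q_mult_outside)
    moreover have "(Q *v ?w)$a = d * ?w$a" using False by (rule Q_mult_outside)
    ultimately have "real p * (f$a + (Q *v u)$a) = (1 / d) * (d * shift p j n $ a + d * ?w$a)"
      using scaled by simp
    also have "\<dots> = shift p j n $ a + ?w$a"
      using d_ge_1 by (simp add: field_simps)
    also have "shift p j n $ a = of_int (int (j$a) + int p * n a)"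
      using False by (simp add: shift_def)
    finally have "\<lfloor>real p * (f$a + (Q *v u)$a)\<rfloor> = int (j$a) + int p * n a"
      using w01 unfolding floor_eq_iff by linarith
    then show ?thesis using False by simp
  qed
qed

lemma tadd_in_gridbox_iff:
  assumes "p \<ge> 1" and "\<forall>i. j$i < p"
  shows "tadd f v \<in> gridbox p j \<longleftrightarrow> (\<forall>a. \<lfloor>real p * (f$a + v$a)\<rfloor> mod int p = int (j$a))"
  using assms floor_mult_mod_eq_iff[of "int p" "int (j$_)"]
  by (simp add: gridbox_def tadd_def)

lemma param_gridbox_cell_invariant:
  assumes p: "p \<ge> 1" and j: "\<forall>i. j$i < p" and f: "f \<in> F"
    and w: "rescale p j n u \<in> cell \<alpha>" and w': "rescale p j n u' \<in> cell \<alpha>"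
    and u: "param (f, u) \<in> gridbox p j"
  shows "param (f, u') \<in> gridbox p j"
  using u floor_scaled_param[OF p f w] floor_scaled_param[OF p f w']
  by (simp add: param_def tadd_in_gridbox_iff[OF p j])

lemma param_gridbox_covered:
  assumes p: "p \<ge> 1" and f: "f \<in> F" and u: "u \<in> torus"
    and u_box: "param (f, u) \<in> gridbox p j"
  shows "\<exists>n\<in>digit_indices. \<exists>\<alpha>\<in>cell_indices. rescale p j n u \<in> cell \<alpha>"
proof -
  define n where "n a = \<lfloor>d * u$a\<rfloor>" for a
  define w where "w = rescale p j n u"
  define \<alpha> where "\<alpha> a = \<lfloor>(Q *v w)$a\<rfloor>" for a
  have u01: "0 \<le> u$a" "u$a < 1" for a using u by (auto simp: torus_def)
  have "n \<in> digit_indices"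
  proof -
    have "0 \<le> d * u$a" "d * u$a < d * 1" for a
      using u01[of a] d_ge_1 by (auto intro: mult_strict_left_mono)
    then show ?thesis by (auto simp: digit_indices_def n_def floor_less_iff simp flip: d_eq)
  qed
  have w_torus: "w \<in> torus"
  proof -
    have "0 \<le> w$a \<and> w$a < 1" for a
    proof (cases "a \<in> S")
      case True
      then show ?thesis using u01[of a] by (simp add: w_def rescale_def)
    next
      case False
      have "param (f, u) $ a = frac (d * u$a)"
        using F_outside[OF f False] Q_mult_outside[OF False] by (simp add: param_def tadd_def)
      then have "real (j$a) / real p \<le> frac (d * u$a)" "frac (d * u$a) < (real (j$a) + 1) / real p"
        using u_box by (auto simp: gridbox_def dest!: spec[of _ a])
      then have "real (j$a) \<le> real p * frac (d * u$a)" "real p * frac (d * u$a) < real (j$a) + 1"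
        using p by (simp_all add: divide_le_eq less_divide_eq mult.commute)
      moreover have "w$a = real p * frac (d * u$a) - real (j$a)"
        using False by (simp add: w_def rescale_def n_def frac_def algebra_simps)
      ultimately show ?thesis by simp
    qed
    then show ?thesis by (simp add: torus_def)
  qed
  have "\<alpha> a \<in> {-Q_norm..Q_norm}" for a
    using abs_Q_mult_le[OF w_torus, of a]
    by (auto simp: \<alpha>_def abs_le_iff le_floor_iff floor_le_iff)
  then have "\<alpha> \<in> cell_indices" by (simp add: cell_indices_def)
  moreover have "w \<in> cell \<alpha>" using w_torus by (simp add: cell_def \<alpha>_def)
  ultimately show ?thesis using \<open>n \<in> digit_indices\<close> unfolding w_def by blast
qed

lemma slice_contains_rescaled_cell:
  assumes p: "p \<ge> 1" and j: "\<forall>i. j$i < p" and f: "f \<in> F"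
    and nonzero: "emeasure lebesgue {u \<in> torus. param (f, u) \<in> gridbox p j} \<noteq> 0"
  obtains n \<alpha> where "\<alpha> \<in> cell_indices"
    and "rescale p j n -` cell \<alpha> \<subseteq> {u \<in> torus. param (f, u) \<in> gridbox p j}"
    and "emeasure lebesgue (rescale p j n -` cell \<alpha>) \<noteq> 0"
proof -
  let ?U = "{u \<in> torus. param (f, u) \<in> gridbox p j}"
  let ?V = "\<lambda>(n, \<alpha>). rescale p j n -` cell \<alpha>"
  let ?I = "digit_indices \<times> cell_indices"
  have V_sets: "?V x \<in> sets lebesgue" for x
    using emeasure_rescale_vimage(1)[OF p] cell_borel by (auto split: prod.splits)
  have U_sets: "?U \<in> sets lebesgue" by (rule param_slice_sets[OF gridbox_borel])
  have "?U \<subseteq> (\<Union>x\<in>?I. ?V x \<inter> ?U)"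
    using param_gridbox_covered[OF p f] by fastforce
  then have "emeasure lebesgue ?U \<le> emeasure lebesgue (\<Union>x\<in>?I. ?V x \<inter> ?U)"
    using V_sets U_sets finite_digit_indices finite_cell_indices by (intro emeasure_mono) auto
  also have "\<dots> \<le> (\<Sum>x\<in>?I. emeasure lebesgue (?V x \<inter> ?U))"
    using V_sets U_sets finite_digit_indices finite_cell_indices
    by (intro emeasure_subadditive_finite) auto
  finally obtain n \<alpha> where n: "n \<in> digit_indices" and \<alpha>: "\<alpha> \<in> cell_indices"
    and nz: "emeasure lebesgue (?V (n, \<alpha>) \<inter> ?U) \<noteq> 0"
    using nonzero by (metis (no_types, lifting) SigmaE le_zero_eq sum.neutral)
  then have "?V (n, \<alpha>) \<inter> ?U \<noteq> {}" by (metis emeasure_empty)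
  then obtain u0 where u0: "rescale p j n u0 \<in> cell \<alpha>" "u0 \<in> ?U" by auto
  have sub: "?V (n, \<alpha>) \<subseteq> ?U"
  proof
    fix u assume "u \<in> ?V (n, \<alpha>)"
    then have u: "rescale p j n u \<in> cell \<alpha>" by simp
    then have "u \<in> torus" using rescale_in_torus_imp[OF p j n] cell_torus by blast
    moreover have "param (f, u) \<in> gridbox p j"
      using param_gridbox_cell_invariant[OF p j f u0(1) u] u0(2) by simp
    ultimately show "u \<in> ?U" by simp
  qed
  moreover have "emeasure lebesgue (?V (n, \<alpha>)) \<noteq> 0"
    using nz emeasure_mono[OF Int_lower1 V_sets[of "(n, \<alpha>)"]] by auto
  ultimately show ?thesis using that \<alpha> by simp
qed

lemma param_slice_emeasure_ge:
  assumes p: "p \<ge> 1" and j: "\<forall>i. j$i < p" and f: "f \<in> F"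
    and nonzero: "emeasure lebesgue {u \<in> torus. param (f, u) \<in> gridbox p j} \<noteq> 0"
  shows "ennreal (min_cell_measure / (d * real p) ^ card (- S))
    \<le> emeasure lebesgue {u \<in> torus. param (f, u) \<in> gridbox p j}"
proof -
  let ?U = "{u \<in> torus. param (f, u) \<in> gridbox p j}"
  obtain n \<alpha> where \<alpha>: "\<alpha> \<in> cell_indices"
    and sub: "rescale p j n -` cell \<alpha> \<subseteq> ?U"
    and nz: "emeasure lebesgue (rescale p j n -` cell \<alpha>) \<noteq> 0"
    using slice_contains_rescaled_cell[OF assms] .
  let ?V = "rescale p j n -` cell \<alpha>"
  define c where "c = (d * real p) ^ card (- S)"
  have c: "c > 0" using d_ge_1 p by (simp add: c_def)
  have V_sets: "?V \<in> sets lebesgue"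
    using emeasure_rescale_vimage(1)[OF p] cell_borel by auto
  have V_finite: "emeasure lebesgue ?V = ennreal (measure lebesgue ?V)"
    using sub by (intro emeasure_lebesgue_torus_subset_finite) auto
  have "ennreal (measure lebesgue (cell \<alpha>)) = emeasure lebesgue (cell \<alpha>)"
    by (rule emeasure_lebesgue_torus_subset_finite[OF cell_torus, symmetric])
  also have "\<dots> = ennreal c * emeasure lebesgue ?V"
    unfolding c_def by (rule emeasure_rescale_vimage(2)[OF p]) (use cell_borel in auto)
  finally have "ennreal (measure lebesgue (cell \<alpha>)) = ennreal c * emeasure lebesgue ?V" .
  then have cell_eq: "measure lebesgue (cell \<alpha>) = c * measure lebesgue ?V"
    using c V_finite by (simp add: ennreal_mult[symmetric])
  have "measure lebesgue ?V > 0"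
    using nz V_finite measure_nonneg[of lebesgue ?V] by (auto simp: less_le)
  then have "min_cell_measure \<le> c * measure lebesgue ?V"
    using min_cell_measure_le[OF \<alpha>] c cell_eq by simp
  then have "ennreal (min_cell_measure / c) \<le> emeasure lebesgue ?V"
    using c V_finite by (simp add: divide_le_eq mult.commute ennreal_leI)
  also have "\<dots> \<le> emeasure lebesgue ?U"
    using sub param_slice_sets[OF gridbox_borel] by (rule emeasure_mono)
  finally show ?thesis by (simp add: c_def)
qed

lemma lam_lower_bound:
  assumes p: "p \<ge> 1" and J: "inJ L p j"
  shows "min_cell_measure / (card F * d ^ card (- S)) \<le> lam L p j"
proof -
  interpret \<mu>: prob_space image_measure by (rule prob_space_image_measure)
  let ?B = "gridbox p j"
  let ?slice = "\<lambda>f. {u \<in> torus. param (f, u) \<in> ?B}"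
  have j: "\<forall>i. j$i < p" using J by (simp add: inJ_def)
  have BK: "?B \<inter> K \<in> sets borel" using gridbox_borel kerT_borel[of L] by auto
  have slice_eq: "{u \<in> torus. param (f, u) \<in> ?B \<inter> K} = ?slice f" if "f \<in> F" for f
    using param_in_kerT[of "(f, _)"] that by auto
  have box_kernel_measure: "ennreal (measure image_measure (?B \<inter> K))
      = (\<Sum>f\<in>F. ennreal (1 / card F) * emeasure lebesgue (?slice f))"
    using emeasure_image_measure[OF BK] slice_eq by (simp add: \<mu>.emeasure_eq_measure)
  have "measure image_measure (?B \<inter> K) > 0" using J by (simp add: inJ_def muL_eq_image_measure)
  then obtain f where f: "f \<in> F" and nz: "emeasure lebesgue (?slice f) \<noteq> 0"
    using box_kernel_measure
    by (metis (no_types, lifting) ennreal_eq_0_iff mult_zero_right not_less sum.neutral)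
  have "ennreal (1 / card F * (min_cell_measure / (d * real p) ^ card (- S)))
      = ennreal (1 / card F) * ennreal (min_cell_measure / (d * real p) ^ card (- S))"
    using min_cell_measure_pos d_ge_1 by (intro ennreal_mult) auto
  also have "\<dots> \<le> ennreal (1 / card F) * emeasure lebesgue (?slice f)"
    using param_slice_emeasure_ge[OF p j f nz] by (rule mult_left_mono) simp
  also have "\<dots> \<le> ennreal (measure image_measure (?B \<inter> K))"
    unfolding box_kernel_measure using f finite_F by (intro member_le_sum) auto
  finally have le: "1 / card F * (min_cell_measure / (d * real p) ^ card (- S))
      \<le> measure image_measure (?B \<inter> K)"
    by simp
  have "min_cell_measure / (card F * d ^ card (- S))
      = real p ^ card (- S) * (1 / card F * (min_cell_measure / (d * real p) ^ card (- S)))"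
    using p d_ge_1 by (simp add: field_simps)
  also have "\<dots> \<le> real p ^ card (- S) * measure image_measure (?B \<inter> K)"
    using le by (rule mult_left_mono) simp
  also have "\<dots> = lam L p j"
    by (simp add: lam_def muL_eq_image_measure card_Compl_S Int_commute)
  finally show ?thesis .
qed

end

theorem lemma3p1:
  fixes L :: "int^'m^'r"
  assumes "rank (realmat L) = CARD('r)"
  shows "\<exists>lamstar > 0. \<exists>p0::nat. \<forall>p::nat. \<forall>j::nat^'m.
           p \<ge> p0 \<longrightarrow> inJ L p j \<longrightarrow> lam L p j \<ge> lamstar"
proof -
  obtain S E d where "int_right_inverse L S E d"
    using full_rank_obtains_int_right_inverse[OF assms] .
  then interpret int_right_inverse L S E d .
  have "card F > 0" using finite_F zero_in_F by (auto simp: card_gt_0_iff)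
  then have "min_cell_measure / (card F * d ^ card (- S)) > 0"
    using min_cell_measure_pos d_ge_1 by simp
  then show ?thesis
    using lam_lower_bound
    by (intro exI[of _ "min_cell_measure / (card F * d ^ card (- S))"] conjI exI[of _ 1]) auto
qed

end
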